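(* Let $(H,\mathcal P)$ be a hypergraph colouring instance with pinnings, $H=(V,\mathcal E)$ with maximum degree $\Delta$, and let $k'\le k$ be integers with $k'\ge 2$ such that $k'\le|e|\le k$ for every $e\in\mathcal E$. Let $t\ge k$ and $q\ge(\mathrm e t\Delta)^{\frac{1}{k'-1}}$. Then for every $v\in V$ and every colour $c\in[q]$, $$\Pr_{\sigma\sim\mu_{\mathcal C}}[\sigma(v)=c]\ge\frac1q\Big(1-\frac1t\Big).$$
   Context: A hypergraph $H=(V,\mathcal E)$ has finite vertex set $V$ and hyperedges $\mathcal E\subseteq 2^V$; its maximum degree $\Delta$ is the maximum number of hyperedges containing a single vertex. For $q\in\mathbb N$, a hypergraph colouring instance with pinnings is a pair $(H,\mathcal P)$ with $\mathcal P=\{P_e\subseteq[q]:e\in\mathcal E\}$. A colouring $\sigma\in[q]^V$ is proper if $|\{\sigma(u):u\in e\}\cup P_e|>1$ for every $e\in\mathcal E$. $\mathcal C$ is the set of proper colourings and $\mu_{\mathcal C}$ the uniform distribution on $\mathcal C$. $\mathrm e$ denotes Euler's number. *)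

theory Defs
  imports "HOL-Analysis.Analysis"
begin

definition colourings :: "'v set \<Rightarrow> nat \<Rightarrow> ('v \<Rightarrow> nat) set" where
  "colourings V q = (V \<rightarrow>\<^sub>E {1..q})"

definition proper_colourings ::
  "'v set \<Rightarrow> 'v set set \<Rightarrow> ('v set \<Rightarrow> nat set) \<Rightarrow> nat \<Rightarrow> ('v \<Rightarrow> nat) set" where
  "proper_colourings V E P q =
     {\<sigma> \<in> colourings V q. \<forall>e\<in>E. card ((\<sigma> ` e) \<union> P e) > 1}"

definition degree :: "'v set set \<Rightarrow> 'v \<Rightarrow> nat" where
  "degree E v = card {e \<in> E. v \<in> e}"

definition max_degree :: "'v set \<Rightarrow> 'v set set \<Rightarrow> nat" where
  "max_degree V E = Max (insert 0 (degree E ` V))"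

definition prob_colour ::
  "'v set \<Rightarrow> 'v set set \<Rightarrow> ('v set \<Rightarrow> nat set) \<Rightarrow> nat \<Rightarrow> 'v \<Rightarrow> nat \<Rightarrow> real" where
  "prob_colour V E P q v c =
     real (card {\<sigma> \<in> proper_colourings V E P q. \<sigma> v = c})
       / real (card (proper_colourings V E P q))"

end

theory Submission
  imports Defs
begin

(* Put x = 1/(k\<Delta>). The event that an edge e is not properly coloured depends only on the colours
   of e, has probability at most q^(1-|e|) \<le> 1/(e t \<Delta>) \<le> 1/(e k \<Delta>), and e meets at most k\<Delta> - 1
   other edges; since (1 - x)^(k\<Delta>-1) \<ge> 1/e, these events satisfy the hypothesis
   Pr[A_e] \<le> x (1 - x)^(number of neighbours) of the Lovasz local lemma. The local lemma in its
   conditional form (an event depending on a set T that meets m edges has its probability increased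
   by at most the factor (1 - x)^(-m) when conditioning on all edges being proper) bounds the
   probability that a uniform proper colouring gives colour c to all of e - {v} by
   q^(1-|e|) (1 - x)^(-(k-1)\<Delta>) \<le> 1/(t\<Delta>). So with probability at least 1 - 1/t no edge through v
   is blocked in this way; recolouring v with c then keeps the colouring proper, and each colouring
   arises from at most q others, whence Pr[\<sigma>(v) = c] \<ge> (1 - 1/t)/q. *)

definition depends_only_on :: "('v \<Rightarrow> 'a) set \<Rightarrow> ('v \<Rightarrow> 'a) set \<Rightarrow> 'v set \<Rightarrow> bool" where
  "depends_only_on \<Omega> B T \<longleftrightarrow>
     B \<subseteq> \<Omega> \<and> (\<forall>\<sigma>\<in>\<Omega>. \<forall>\<tau>\<in>\<Omega>. (\<forall>u\<in>T. \<sigma> u = \<tau> u) \<longrightarrow> (\<sigma> \<in> B \<longleftrightarrow> \<tau> \<in> B))"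

lemma card_Int_mult_card_PiE_if_depends_on_complements:
  fixes V :: "'v set" and S :: "'a set"
  assumes B: "depends_only_on (V \<rightarrow>\<^sub>E S) B T" and C: "depends_only_on (V \<rightarrow>\<^sub>E S) C (V - T)"
  shows "card (B \<inter> C) * card (V \<rightarrow>\<^sub>E S) = card B * card C"
proof -
  define \<Omega> where "\<Omega> = V \<rightarrow>\<^sub>E S"
  define merge :: "('v \<Rightarrow> 'a) \<Rightarrow> ('v \<Rightarrow> 'a) \<Rightarrow> 'v \<Rightarrow> 'a" where
    "merge \<sigma> \<tau> = (\<lambda>u. if u \<in> T then \<sigma> u else \<tau> u)" for \<sigma> \<tau>
  define swap where "swap p = (merge (fst p) (snd p), merge (snd p) (fst p))" for p
  have merge_in: "merge \<sigma> \<tau> \<in> \<Omega>" if "\<sigma> \<in> \<Omega>" "\<tau> \<in> \<Omega>" for \<sigma> \<tau>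
    using that by (auto simp: \<Omega>_def merge_def PiE_def Pi_def extensional_def)
  have merge_in_B: "merge \<sigma> \<tau> \<in> B \<longleftrightarrow> \<sigma> \<in> B" if "\<sigma> \<in> \<Omega>" "\<tau> \<in> \<Omega>" for \<sigma> \<tau>
  proof -
    have "\<forall>u\<in>T. merge \<sigma> \<tau> u = \<sigma> u" by (simp add: merge_def)
    then show ?thesis using B merge_in[OF that] that unfolding depends_only_on_def \<Omega>_def by blast
  qed
  have merge_in_C: "merge \<tau> \<sigma> \<in> C \<longleftrightarrow> \<sigma> \<in> C" if "\<sigma> \<in> \<Omega>" "\<tau> \<in> \<Omega>" for \<sigma> \<tau>
  proof -
    have "\<forall>u\<in>V - T. merge \<tau> \<sigma> u = \<sigma> u" by (simp add: merge_def)
    then show ?thesis using C merge_in[OF that(2,1)] that unfolding depends_only_on_def \<Omega>_def by blast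
  qed
  have "B \<subseteq> \<Omega>" "C \<subseteq> \<Omega>" using B C by (auto simp: depends_only_on_def \<Omega>_def)
  have swap_swap: "swap (swap p) = p" for p
    by (cases p) (simp add: swap_def merge_def fun_eq_iff)
  \<comment> \<open>Exchanging the \<open>T\<close>-coordinates of two colourings is an involution of \<open>\<Omega> \<times> \<Omega>\<close>
      mapping \<open>(B \<inter> C) \<times> \<Omega>\<close> onto \<open>B \<times> C\<close>.\<close>
  have "swap p \<in> B \<times> C" if "p \<in> (B \<inter> C) \<times> \<Omega>" for p
    using that \<open>B \<subseteq> \<Omega>\<close> by (auto simp: swap_def merge_in_B merge_in_C)
  moreover have "swap p \<in> (B \<inter> C) \<times> \<Omega>" if p: "p \<in> B \<times> C" for p
  proof -
    obtain \<sigma> \<tau> where p: "p = (\<sigma>, \<tau>)" "\<sigma> \<in> B" "\<tau> \<in> C" using p by auto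
    then have "\<sigma> \<in> \<Omega>" "\<tau> \<in> \<Omega>" using \<open>B \<subseteq> \<Omega>\<close> \<open>C \<subseteq> \<Omega>\<close> by auto
    then show ?thesis using p by (simp add: swap_def merge_in merge_in_B merge_in_C)
  qed
  ultimately have "bij_betw swap ((B \<inter> C) \<times> \<Omega>) (B \<times> C)"
    by (intro bij_betw_byWitness[where f' = swap] ballI image_subsetI swap_swap)
  then have "card ((B \<inter> C) \<times> \<Omega>) = card (B \<times> C)"
    by (rule bij_betw_same_card)
  then show ?thesis by (simp add: card_cartesian_product \<Omega>_def)
qed

locale counting_lll =
  fixes V :: "'v set" and S :: "'a set" and E :: "'v set set"
    and A :: "'v set \<Rightarrow> ('v \<Rightarrow> 'a) set" and x :: real
  assumes finite_V: "finite V" and finite_S: "finite S"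
    and edge_subset: "\<And>g. g \<in> E \<Longrightarrow> g \<subseteq> V"
    and x_nonneg: "0 \<le> x" and x_less_1: "x < 1"
    and A_depends: "\<And>g. g \<in> E \<Longrightarrow> depends_only_on (V \<rightarrow>\<^sub>E S) (A g) g"
    and card_A_le: "\<And>g. g \<in> E \<Longrightarrow>
      real (card (A g)) \<le> x * (1 - x) ^ card {h \<in> E - {g}. h \<inter> g \<noteq> {}} * real (card (V \<rightarrow>\<^sub>E S))"
begin

definition avoiding :: "'v set set \<Rightarrow> ('v \<Rightarrow> 'a) set" where
  "avoiding F = {\<sigma> \<in> V \<rightarrow>\<^sub>E S. \<forall>f\<in>F. \<sigma> \<notin> A f}"

text \<open>The counting form of \<open>Pr[B | avoiding F] \<le> Pr[B] (1 - x)\<^sup>-\<^sup>m\<close>,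
  where \<open>m\<close> is the number of events of \<open>F\<close> sharing a variable with \<open>B\<close>.\<close>
definition conditional_bound :: "'v set set \<Rightarrow> bool" where
  "conditional_bound F \<longleftrightarrow> (\<forall>B T. depends_only_on (V \<rightarrow>\<^sub>E S) B T \<longrightarrow>
     real (card (B \<inter> avoiding F)) * (1 - x) ^ card {g \<in> F. g \<inter> T \<noteq> {}} * real (card (V \<rightarrow>\<^sub>E S))
       \<le> real (card B) * real (card (avoiding F)))"

lemma finite_E: "finite E"
  using finite_V edge_subset by (meson Pow_iff finite_Pow_iff finite_subset subsetI)

lemma avoiding_subset: "avoiding F \<subseteq> V \<rightarrow>\<^sub>E S"
  by (auto simp: avoiding_def)

lemma finite_avoiding: "finite (avoiding F)"
  using avoiding_subset finite_V finite_S by (meson finite_PiE finite_subset)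

lemma avoiding_depends_only_on:
  assumes "F \<subseteq> E" and "\<And>f. f \<in> F \<Longrightarrow> f \<subseteq> W"
  shows "depends_only_on (V \<rightarrow>\<^sub>E S) (avoiding F) W"
  unfolding depends_only_on_def
proof (intro conjI avoiding_subset ballI impI)
  fix \<sigma> \<tau> assume \<sigma>: "\<sigma> \<in> V \<rightarrow>\<^sub>E S" and \<tau>: "\<tau> \<in> V \<rightarrow>\<^sub>E S" and agree: "\<forall>u\<in>W. \<sigma> u = \<tau> u"
  have "\<sigma> \<in> A f \<longleftrightarrow> \<tau> \<in> A f" if "f \<in> F" for f
    using A_depends[of f] assms that \<sigma> \<tau> agree unfolding depends_only_on_def by blast
  then show "\<sigma> \<in> avoiding F \<longleftrightarrow> \<tau> \<in> avoiding F"
    using \<sigma> \<tau> by (auto simp: avoiding_def)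
qed

lemma card_avoiding_insert_ge:
  assumes bound: "conditional_bound H" and "H \<subseteq> E" and g: "g \<in> E" "g \<notin> H"
  shows "(1 - x) * real (card (avoiding H)) \<le> real (card (avoiding (insert g H)))"
proof -
  define m where "m = card {h \<in> H. h \<inter> g \<noteq> {}}"
  define N where "N = real (card (V \<rightarrow>\<^sub>E S))"
  have "m \<le> card {h \<in> E - {g}. h \<inter> g \<noteq> {}}"
    unfolding m_def using \<open>H \<subseteq> E\<close> g finite_E by (intro card_mono) auto
  then have "real (card (A g)) \<le> x * (1 - x) ^ m * N"
    using card_A_le[OF g(1)] x_nonneg x_less_1 unfolding N_def
    by (smt (verit) mult_left_mono mult_right_mono of_nat_0_le_iff power_decreasing)
  moreover have "real (card (A g \<inter> avoiding H)) * (1 - x) ^ m * N \<le> real (card (A g)) * real (card (avoiding H))"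
    using bound A_depends[OF g(1)] unfolding conditional_bound_def m_def N_def by blast
  ultimately have "real (card (A g \<inter> avoiding H)) * ((1 - x) ^ m * N) \<le> (x * real (card (avoiding H))) * ((1 - x) ^ m * N)"
    by (smt (verit) mult.assoc mult.commute mult_right_mono of_nat_0_le_iff)
  moreover have "N > 0 \<or> avoiding H = {}"
    using avoiding_subset finite_V finite_S by (auto simp: N_def finite_PiE card_gt_0_iff)
  ultimately have "real (card (A g \<inter> avoiding H)) \<le> x * real (card (avoiding H))"
    using x_less_1 by (auto simp: mult_le_cancel_right_pos)
  moreover have "card (avoiding H) = card (avoiding (insert g H)) + card (A g \<inter> avoiding H)"
  proof -
    have "avoiding H = avoiding (insert g H) \<union> (A g \<inter> avoiding H)"
      and "avoiding (insert g H) \<inter> (A g \<inter> avoiding H) = {}"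
      by (auto simp: avoiding_def)
    then show ?thesis using finite_avoiding by (metis card_Un_disjoint finite_Int)
  qed
  ultimately show ?thesis by (simp add: algebra_simps)
qed

lemma card_avoiding_Un_ge:
  assumes "finite K" "K \<subseteq> E" "F \<subseteq> E" "K \<inter> F = {}"
    and "\<And>H. H \<subset> F \<union> K \<Longrightarrow> conditional_bound H"
  shows "(1 - x) ^ card K * real (card (avoiding F)) \<le> real (card (avoiding (F \<union> K)))"
  using assms
proof (induction K rule: finite_induct)
  case empty
  then show ?case by simp
next
  case (insert g K)
  have bounds: "conditional_bound H" if "H \<subseteq> F \<union> K" for H
    using that insert.hyps insert.prems by (intro insert.prems(4)) auto
  then have IH: "(1 - x) ^ card K * real (card (avoiding F)) \<le> real (card (avoiding (F \<union> K)))"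
    using insert.prems by (intro insert.IH) auto
  have step: "(1 - x) * real (card (avoiding (F \<union> K))) \<le> real (card (avoiding (F \<union> insert g K)))"
    using card_avoiding_insert_ge[of "F \<union> K" g] bounds[of "F \<union> K"] insert by auto
  have "(1 - x) ^ card (insert g K) * real (card (avoiding F))
      = (1 - x) * ((1 - x) ^ card K * real (card (avoiding F)))"
    using insert.hyps by simp
  also have "\<dots> \<le> (1 - x) * real (card (avoiding (F \<union> K)))"
    using IH x_less_1 by (intro mult_left_mono) auto
  also have "\<dots> \<le> real (card (avoiding (F \<union> insert g K)))"
    by (fact step)
  finally show ?case .
qed

lemma conditional_bound_if_psubsets:
  assumes "F \<subseteq> E" and psubsets: "\<And>H. H \<subset> F \<Longrightarrow> conditional_bound H"
  shows "conditional_bound F"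
  unfolding conditional_bound_def
proof (intro allI impI)
  fix B T assume B: "depends_only_on (V \<rightarrow>\<^sub>E S) B T"
  define F\<^sub>T where "F\<^sub>T = {g \<in> F. g \<inter> T \<noteq> {}}"
  define N where "N = real (card (V \<rightarrow>\<^sub>E S))"
  have "finite B"
    using B finite_V finite_S by (meson depends_only_on_def finite_PiE finite_subset)
  then have fewer: "card (B \<inter> avoiding F) \<le> card (B \<inter> avoiding (F - F\<^sub>T))"
    by (intro card_mono) (auto simp: avoiding_def)
  \<comment> \<open>The events of \<open>F - F\<^sub>T\<close> do not look at \<open>T\<close>, so they are independent of \<open>B\<close>.\<close>
  have "depends_only_on (V \<rightarrow>\<^sub>E S) (avoiding (F - F\<^sub>T)) (V - T)"
    using \<open>F \<subseteq> E\<close> edge_subset by (intro avoiding_depends_only_on) (auto simp: F\<^sub>T_def)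
  then have indep: "real (card (B \<inter> avoiding (F - F\<^sub>T))) * N = real (card B) * real (card (avoiding (F - F\<^sub>T)))"
    unfolding N_def using card_Int_mult_card_PiE_if_depends_on_complements[OF B] by (metis of_nat_mult)
  have "F\<^sub>T \<subseteq> F" by (auto simp: F\<^sub>T_def)
  then have union: "F - F\<^sub>T \<union> F\<^sub>T = F" by blast
  have "finite F\<^sub>T"
    by (rule finite_subset[OF \<open>F\<^sub>T \<subseteq> F\<close> finite_subset[OF \<open>F \<subseteq> E\<close> finite_E]])
  then have peel: "(1 - x) ^ card F\<^sub>T * real (card (avoiding (F - F\<^sub>T))) \<le> real (card (avoiding F))"
    using card_avoiding_Un_ge[of F\<^sub>T "F - F\<^sub>T"] \<open>F\<^sub>T \<subseteq> F\<close> \<open>F \<subseteq> E\<close> psubsets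
    unfolding union by blast
  have "0 \<le> (1 - x) ^ card F\<^sub>T" "0 \<le> N"
    using x_less_1 by (auto simp: N_def)
  then have "real (card (B \<inter> avoiding F)) * (1 - x) ^ card F\<^sub>T * N
      \<le> real (card (B \<inter> avoiding (F - F\<^sub>T))) * N * (1 - x) ^ card F\<^sub>T"
    using fewer by (simp add: mult.commute mult_left_mono mult.left_commute)
  also have "\<dots> = real (card B) * ((1 - x) ^ card F\<^sub>T * real (card (avoiding (F - F\<^sub>T))))"
    by (simp add: indep)
  also have "\<dots> \<le> real (card B) * real (card (avoiding F))"
    using peel by (intro mult_left_mono) auto
  finally show "real (card (B \<inter> avoiding F)) * (1 - x) ^ card F\<^sub>T * N \<le> real (card B) * real (card (avoiding F))" .
qed

lemma conditional_bound:
  assumes "F \<subseteq> E"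
  shows "conditional_bound F"
proof -
  have "finite F" using assms finite_E finite_subset by blast
  then show ?thesis using assms
  proof (induction F rule: finite_psubset_induct)
    case (psubset F)
    have "conditional_bound H" if "H \<subset> F" for H
      using psubset that by (meson psubset_imp_subset subset_trans)
    with psubset.prems show ?case
      by (rule conditional_bound_if_psubsets)
  qed
qed

lemma card_avoiding_ge: "(1 - x) ^ card E * real (card (V \<rightarrow>\<^sub>E S)) \<le> real (card (avoiding E))"
proof -
  have "avoiding {} = V \<rightarrow>\<^sub>E S" by (simp add: avoiding_def)
  then show ?thesis
    using card_avoiding_Un_ge[of E "{}"] finite_E conditional_bound by (simp add: psubset_imp_subset)
qed

end

lemma card_PiE_const_on:
  assumes "finite V" "T \<subseteq> V" "a \<in> S"
  shows "card {\<sigma> \<in> V \<rightarrow>\<^sub>E S. \<forall>u\<in>T. \<sigma> u = a} = card S ^ (card V - card T)"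
proof -
  have "{\<sigma> \<in> V \<rightarrow>\<^sub>E S. \<forall>u\<in>T. \<sigma> u = a} = PiE V (\<lambda>u. if u \<in> T then {a} else S)"
    using assms by (auto simp: PiE_def Pi_def split: if_splits)
  then have "card {\<sigma> \<in> V \<rightarrow>\<^sub>E S. \<forall>u\<in>T. \<sigma> u = a} = (\<Prod>u\<in>V. card (if u \<in> T then {a} else S))"
    using assms by (simp add: card_PiE)
  also have "\<dots> = (\<Prod>u\<in>V. if u \<in> T then 1 else card S)"
    by (rule prod.cong) auto
  also have "\<dots> = card S ^ card (V - T)"
    using assms by (simp add: prod.If_cases Int_absorb2 Diff_eq)
  also have "card (V - T) = card V - card T"
    using assms by (meson card_Diff_subset finite_subset)
  finally show ?thesis .
qed

lemma card_PiE_fun_upd_le: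
  assumes "v \<in> V" "finite S" "W \<subseteq> V \<rightarrow>\<^sub>E S" "(\<lambda>\<sigma>. \<sigma>(v := c)) ` W \<subseteq> Z" "finite Z"
  shows "card W \<le> card Z * card S"
proof -
  let ?upd = "\<lambda>(\<tau>, a). \<tau>(v := a)"
  have "W \<subseteq> ?upd ` (Z \<times> S)"
  proof
    fix \<sigma> assume \<sigma>: "\<sigma> \<in> W"
    have "\<sigma>(v := c) \<in> Z" using \<sigma> assms(4) by blast
    moreover have "\<sigma> v \<in> S" using \<sigma> assms(1,3) by (blast dest: PiE_mem)
    ultimately have "(\<sigma>(v := c), \<sigma> v) \<in> Z \<times> S" by blast
    then have "?upd (\<sigma>(v := c), \<sigma> v) \<in> ?upd ` (Z \<times> S)"
      by (rule imageI)
    then show "\<sigma> \<in> ?upd ` (Z \<times> S)" by simp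
  qed
  then have "card W \<le> card (?upd ` (Z \<times> S))"
    using assms by (intro card_mono finite_imageI finite_cartesian_product)
  also have "\<dots> \<le> card (Z \<times> S)"
    by (rule card_image_le) (use assms in auto)
  finally show ?thesis by (simp add: card_cartesian_product)
qed

lemma degree_le_max_degree: "finite V \<Longrightarrow> u \<in> V \<Longrightarrow> degree E u \<le> max_degree V E"
  unfolding max_degree_def by (intro Max_ge) auto

lemma card_edges_meeting_le:
  assumes "finite V" "T \<subseteq> V"
  shows "card {e \<in> E. e \<inter> T \<noteq> {}} \<le> card T * max_degree V E"
proof -
  have "finite T" using assms finite_subset by blast
  have "{e \<in> E. e \<inter> T \<noteq> {}} = (\<Union>u\<in>T. {e \<in> E. u \<in> e})" by auto
  then have "card {e \<in> E. e \<inter> T \<noteq> {}} \<le> (\<Sum>u\<in>T. degree E u)"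
    using card_UN_le[OF \<open>finite T\<close>] by (simp add: degree_def)
  also have "\<dots> \<le> (\<Sum>u\<in>T. max_degree V E)"
    using assms by (intro sum_mono degree_le_max_degree) auto
  finally show ?thesis by simp
qed

lemma one_le_exp_one_mult_power:
  assumes "1 \<le> D"
  shows "1 \<le> exp 1 * (1 - 1 / real D) ^ (D - 1)"
proof (cases "D = 1")
  case False
  then have "(1 - 1 / real D) * (1 + 1 / real (D - 1)) = 1"
    using assms by (simp add: field_simps of_nat_diff)
  then have "(1 - 1 / real D) ^ (D - 1) * (1 + 1 / real (D - 1)) ^ (D - 1) = 1"
    by (metis power_mult_distrib power_one)
  moreover have "(1 + 1 / real (D - 1)) ^ (D - 1) \<le> exp 1"
    using exp_ge_one_plus_x_over_n_power_n[of "D - 1" 1] assms False by simp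
  moreover have "0 \<le> (1 - 1 / real D) ^ (D - 1)"
    using assms by simp
  ultimately show ?thesis by (metis mult.commute mult_left_mono)
qed simp

lemma le_power_if_powr_inverse_le:
  fixes y a :: real
  assumes "0 \<le> y" "0 < n" "y powr (1 / real n) \<le> a"
  shows "y \<le> a ^ n"
proof -
  have "y = (y powr (1 / real n)) ^ n"
  proof (cases "y = 0")
    case False
    then have "(y powr (1 / real n)) ^ n = (y powr (1 / real n)) powr real n"
      using assms by (simp add: powr_realpow)
    then show ?thesis
      using assms by (simp add: powr_powr)
  qed (use assms in simp)
  also have "\<dots> \<le> a ^ n"
    using assms by (intro power_mono) auto
  finally show ?thesis .
qed

locale pinned_hypergraph_colouring =
  fixes V :: "'v set" and E :: "'v set set" and P :: "'v set \<Rightarrow> nat set"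
    and q k k' :: nat and t :: real
  assumes finite_V: "finite V"
    and edge_subset: "\<And>e. e \<in> E \<Longrightarrow> e \<subseteq> V"
    and pins_subset: "\<And>e. e \<in> E \<Longrightarrow> P e \<subseteq> {1..q}"
    and two_le_k': "2 \<le> k'" and k'_le_k: "k' \<le> k"
    and card_edge: "\<And>e. e \<in> E \<Longrightarrow> k' \<le> card e \<and> card e \<le> k"
    and k_le_t: "real k \<le> t"
    and many_colours: "(exp 1 * t * real (max_degree V E)) powr (1 / (real k' - 1)) \<le> real q"
begin

abbreviation \<Delta> :: nat where "\<Delta> \<equiv> max_degree V E"

abbreviation \<C> :: "('v \<Rightarrow> nat) set" where "\<C> \<equiv> proper_colourings V E P q"

definition lll_weight :: real where "lll_weight = 1 / real (k * \<Delta>)"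

definition monochromatic :: "'v set \<Rightarrow> ('v \<Rightarrow> nat) set" where
  "monochromatic e = {\<sigma> \<in> V \<rightarrow>\<^sub>E {1..q}. card (\<sigma> ` e \<union> P e) \<le> 1}"

lemma two_le_t: "2 \<le> t"
  using two_le_k' k'_le_k k_le_t by linarith

lemma finite_edge: "e \<in> E \<Longrightarrow> finite e"
  using edge_subset finite_V finite_subset by blast

lemma one_le_max_degree:
  assumes "e \<in> E"
  shows "1 \<le> \<Delta>"
proof -
  obtain u where "u \<in> e" using card_edge[OF assms] two_le_k' by fastforce
  have "finite E"
    using finite_V edge_subset by (meson Pow_iff finite_Pow_iff finite_subset subsetI)
  then have "1 \<le> degree E u"
    using assms \<open>u \<in> e\<close> by (auto simp: degree_def Suc_le_eq card_gt_0_iff)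
  also have "\<dots> \<le> \<Delta>"
    using assms \<open>u \<in> e\<close> edge_subset finite_V by (intro degree_le_max_degree) auto
  finally show ?thesis .
qed

lemma edge_power_ge:
  assumes "e \<in> E"
  shows "exp 1 * t * real \<Delta> \<le> real q ^ (card e - 1)"
proof -
  have "real (k' - 1) = real k' - 1" using two_le_k' by simp
  then have bound: "exp 1 * t * real \<Delta> \<le> real q ^ (k' - 1)"
    using two_le_t two_le_k' many_colours by (intro le_power_if_powr_inverse_le) auto
  have "1 < exp 1 * t * real \<Delta>"
    using one_le_max_degree[OF assms] two_le_t
    by (smt (verit, best) exp_gt_one mult_le_cancel_left1 of_nat_1 of_nat_mono one_le_exp_iff)
  then have "1 \<le> real q"
    using bound two_le_k' by (cases q) (auto simp: power_0_left)
  then have "real q ^ (k' - 1) \<le> real q ^ (card e - 1)"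
    using card_edge[OF assms] by (intro power_increasing) auto
  with bound show ?thesis by linarith
qed

lemma lll_weight_nonneg: "0 \<le> lll_weight"
  by (simp add: lll_weight_def)

lemma lll_weight_less_1: "lll_weight < 1"
proof (cases "E = {}")
  case False
  then have "2 \<le> k * \<Delta>"
    using one_le_max_degree two_le_k' k'_le_k by (metis ex_in_conv le_trans mult_le_mono nat_mult_1_right)
  then have "(2::real) \<le> real k * real \<Delta>"
    by (metis of_nat_mult of_nat_numeral of_nat_le_iff)
  then show ?thesis by (simp add: lll_weight_def)
next
  case True
  then have "\<Delta> = 0" by (simp add: max_degree_def degree_def image_constant_conv)
  then show ?thesis by (simp add: lll_weight_def)
qed

lemma one_le_exp_one_mult_power_lll_weight:
  assumes "e \<in> E" "m \<le> k * \<Delta> - 1"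
  shows "1 \<le> exp 1 * (1 - lll_weight) ^ m"
proof -
  have "1 \<le> k * \<Delta>"
    using one_le_max_degree[OF assms(1)] two_le_k' k'_le_k by (simp add: Suc_le_eq)
  then have "1 \<le> exp 1 * (1 - lll_weight) ^ (k * \<Delta> - 1)"
    unfolding lll_weight_def by (rule one_le_exp_one_mult_power)
  also have "\<dots> \<le> exp 1 * (1 - lll_weight) ^ m"
    using assms lll_weight_nonneg lll_weight_less_1 by (intro mult_left_mono power_decreasing) auto
  finally show ?thesis .
qed

lemma card_neighbours_le:
  assumes "e \<in> E"
  shows "card {h \<in> E - {e}. h \<inter> e \<noteq> {}} \<le> k * \<Delta> - 1"
proof -
  have "e \<noteq> {}" using card_edge[OF assms] two_le_k' by auto
  then have "{h \<in> E - {e}. h \<inter> e \<noteq> {}} = {h \<in> E. h \<inter> e \<noteq> {}} - {e}" "e \<in> {h \<in> E. h \<inter> e \<noteq> {}}"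
    using assms by auto
  then have "card {h \<in> E - {e}. h \<inter> e \<noteq> {}} = card {h \<in> E. h \<inter> e \<noteq> {}} - 1"
    by simp
  also have "\<dots> \<le> card e * \<Delta> - 1"
    using assms by (intro diff_le_mono card_edges_meeting_le finite_V edge_subset)
  also have "\<dots> \<le> k * \<Delta> - 1"
    using card_edge[OF assms] by (intro diff_le_mono mult_right_mono) auto
  finally show ?thesis .
qed

lemma card_edges_meeting_Diff_le:
  assumes "e \<in> E" "v \<in> e"
  shows "card {g \<in> E. g \<inter> (e - {v}) \<noteq> {}} \<le> k * \<Delta> - 1"
proof -
  have "card {g \<in> E. g \<inter> (e - {v}) \<noteq> {}} \<le> card (e - {v}) * \<Delta>"
    using edge_subset[OF assms(1)] by (intro card_edges_meeting_le[OF finite_V]) auto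
  also have "\<dots> \<le> (k - 1) * \<Delta>"
    using card_edge[OF assms(1)] assms finite_edge by (intro mult_right_mono) auto
  also have "\<dots> \<le> k * \<Delta> - 1"
    using one_le_max_degree[OF assms(1)] by (simp add: diff_mult_distrib)
  finally show ?thesis .
qed

lemma card_colourings: "card (V \<rightarrow>\<^sub>E {1..q}) = q ^ card V"
  by (simp add: card_PiE finite_V)

lemma card_monochromatic_le:
  assumes "e \<in> E"
  shows "card (monochromatic e) \<le> q * q ^ (card V - card e)"
proof -
  let ?const = "\<lambda>a. {\<sigma> \<in> V \<rightarrow>\<^sub>E {1..q}. \<forall>u\<in>e. \<sigma> u = a}"
  obtain u where "u \<in> e" using card_edge[OF assms] two_le_k' by fastforce
  have "monochromatic e \<subseteq> (\<Union>a\<in>{1..q}. ?const a)"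
  proof
    fix \<sigma> assume \<sigma>: "\<sigma> \<in> monochromatic e"
    have "finite (\<sigma> ` e \<union> P e)"
      using assms finite_edge pins_subset by (meson finite_Un finite_atLeastAtMost finite_imageI finite_subset)
    then have "\<forall>w\<in>e. \<sigma> w = \<sigma> u"
      using \<sigma> \<open>u \<in> e\<close> by (auto simp: monochromatic_def card_le_Suc0_iff_eq)
    moreover have "\<sigma> u \<in> {1..q}"
      using \<sigma> \<open>u \<in> e\<close> edge_subset[OF assms] by (auto simp: monochromatic_def)
    ultimately show "\<sigma> \<in> (\<Union>a\<in>{1..q}. ?const a)"
      using \<sigma> by (auto simp: monochromatic_def)
  qed
  moreover have "finite (V \<rightarrow>\<^sub>E {1..q})"
    using finite_V by (simp add: finite_PiE)
  ultimately have "card (monochromatic e) \<le> card (\<Union>a\<in>{1..q}. ?const a)"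
    by (intro card_mono) (auto intro: rev_finite_subset)
  also have "\<dots> \<le> (\<Sum>a\<in>{1..q}. card (?const a))"
    by (rule card_UN_le) simp
  also have "\<dots> = (\<Sum>a\<in>{1..q}. q ^ (card V - card e))"
  proof (rule sum.cong)
    fix a assume "a \<in> {1..q}"
    then show "card (?const a) = q ^ (card V - card e)"
      using card_PiE_const_on[OF finite_V edge_subset[OF assms], of a "{1..q}"] by simp
  qed simp
  finally show ?thesis by simp
qed

lemma card_monochromatic_le_lll_weight:
  assumes "e \<in> E"
  shows "real (card (monochromatic e))
    \<le> lll_weight * (1 - lll_weight) ^ card {h \<in> E - {e}. h \<inter> e \<noteq> {}} * real (card (V \<rightarrow>\<^sub>E {1..q}))"
proof -
  define m where "m = card {h \<in> E - {e}. h \<inter> e \<noteq> {}}"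
  define R where "R = real q * real q ^ (card V - card e)"
  have "1 \<le> card e" "card e \<le> card V"
    using card_edge[OF assms] two_le_k' finite_V edge_subset[OF assms] by (auto intro: card_mono)
  then have "card V = (card e - 1) + (1 + (card V - card e))" by simp
  then have split: "real (card (V \<rightarrow>\<^sub>E {1..q})) = real q ^ (card e - 1) * R"
    unfolding card_colourings R_def by (metis of_nat_power power_add power_one_right)
  have "1 \<le> k * \<Delta>"
    using one_le_max_degree[OF assms] two_le_k' k'_le_k by (simp add: Suc_le_eq)
  then have weight: "lll_weight * real (k * \<Delta>) = 1" by (simp add: lll_weight_def)
  have "1 \<le> exp 1 * (1 - lll_weight) ^ m"
    unfolding m_def using assms card_neighbours_le[OF assms] by (rule one_le_exp_one_mult_power_lll_weight)
  also have "\<dots> = exp 1 * (1 - lll_weight) ^ m * (lll_weight * real (k * \<Delta>))"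
    by (simp only: weight mult_1_right)
  also have "\<dots> = lll_weight * (1 - lll_weight) ^ m * (exp 1 * real (k * \<Delta>))"
    by (simp only: ac_simps)
  also have "\<dots> \<le> lll_weight * (1 - lll_weight) ^ m * real q ^ (card e - 1)"
  proof -
    have "exp 1 * real (k * \<Delta>) \<le> exp 1 * t * real \<Delta>"
      using k_le_t by (simp add: mult_right_mono)
    also have "\<dots> \<le> real q ^ (card e - 1)"
      by (rule edge_power_ge[OF assms])
    finally show ?thesis
      using lll_weight_nonneg lll_weight_less_1 by (intro mult_left_mono) auto
  qed
  finally have "1 * R \<le> lll_weight * (1 - lll_weight) ^ m * real q ^ (card e - 1) * R"
    by (rule mult_right_mono) (simp add: R_def)
  moreover have "real (card (monochromatic e)) \<le> R"
    unfolding R_def using card_monochromatic_le[OF assms] by (metis of_nat_le_iff of_nat_mult of_nat_power)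
  ultimately show ?thesis
    unfolding split m_def by (simp add: mult.assoc)
qed

lemma monochromatic_depends_only_on: "depends_only_on (V \<rightarrow>\<^sub>E {1..q}) (monochromatic e) e"
  by (auto simp: depends_only_on_def monochromatic_def cong: image_cong)

sublocale lll: counting_lll V "{1..q}" E monochromatic lll_weight
  using finite_V edge_subset lll_weight_nonneg lll_weight_less_1
    monochromatic_depends_only_on card_monochromatic_le_lll_weight
  by unfold_locales auto

lemma proper_colourings_eq_avoiding: "\<C> = lll.avoiding E"
  unfolding proper_colourings_def colourings_def lll.avoiding_def monochromatic_def by (auto simp: not_le)

lemma proper_colourings_subset: "\<C> \<subseteq> V \<rightarrow>\<^sub>E {1..q}"
  by (auto simp: proper_colourings_def colourings_def)

lemma finite_proper_colourings: "finite \<C>"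
  using proper_colourings_subset finite_V by (meson finite_PiE finite_atLeastAtMost finite_subset)

lemma card_proper_colourings_pos:
  assumes "1 \<le> q"
  shows "0 < card \<C>"
proof -
  have "0 < (1 - lll_weight) ^ card E * real (card (V \<rightarrow>\<^sub>E {1..q}))"
    unfolding card_colourings using assms lll_weight_less_1 by simp
  also have "\<dots> \<le> real (card \<C>)"
    unfolding proper_colourings_eq_avoiding by (rule lll.card_avoiding_ge)
  finally show ?thesis by simp
qed

definition blocked_by :: "'v set \<Rightarrow> 'v \<Rightarrow> nat \<Rightarrow> ('v \<Rightarrow> nat) set" where
  "blocked_by e v c = {\<sigma> \<in> V \<rightarrow>\<^sub>E {1..q}. \<forall>u\<in>e - {v}. \<sigma> u = c}"

definition blocked :: "'v \<Rightarrow> nat \<Rightarrow> ('v \<Rightarrow> nat) set" where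
  "blocked v c = (\<Union>e\<in>{e \<in> E. v \<in> e}. blocked_by e v c)"

lemma card_blocked_by_Int_le:
  assumes e: "e \<in> E" "v \<in> e" and c: "c \<in> {1..q}"
  shows "real (card (blocked_by e v c \<inter> \<C>)) * (t * real \<Delta>) \<le> real (card \<C>)"
proof -
  define T where "T = e - {v}"
  define m where "m = card {g \<in> E. g \<inter> T \<noteq> {}}"
  define x where "x = lll_weight"
  have "T \<subseteq> V" using edge_subset[OF e(1)] by (auto simp: T_def)
  have card_T: "card T = card e - 1" using e finite_edge by (simp add: T_def)
  have "depends_only_on (V \<rightarrow>\<^sub>E {1..q}) (blocked_by e v c) T"
    by (auto simp: depends_only_on_def blocked_by_def T_def)
  then have cond: "real (card (blocked_by e v c \<inter> \<C>)) * (1 - x) ^ m * real (card (V \<rightarrow>\<^sub>E {1..q}))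
      \<le> real (card (blocked_by e v c)) * real (card \<C>)"
    using lll.conditional_bound[of E] unfolding lll.conditional_bound_def proper_colourings_eq_avoiding m_def x_def
    by blast
  have "card (blocked_by e v c) = q ^ (card V - card T)"
    using card_PiE_const_on[OF finite_V \<open>T \<subseteq> V\<close>, of c "{1..q}"] c by (simp add: blocked_by_def T_def)
  moreover have "card (V \<rightarrow>\<^sub>E {1..q}) = q ^ card T * q ^ (card V - card T)"
    unfolding card_colourings using card_mono[OF finite_V \<open>T \<subseteq> V\<close>] by (simp flip: power_add)
  moreover have "0 < real q ^ (card V - card T)"
    using c by simp
  ultimately have bound: "real (card (blocked_by e v c \<inter> \<C>)) * ((1 - x) ^ m * real q ^ card T) \<le> real (card \<C>)"
    using cond by (simp add: algebra_simps)
  have "1 \<le> exp 1 * (1 - x) ^ m"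
    unfolding x_def m_def T_def using e by (intro one_le_exp_one_mult_power_lll_weight card_edges_meeting_Diff_le)
  then have "1 * (t * real \<Delta>) \<le> exp 1 * (1 - x) ^ m * (t * real \<Delta>)"
    using two_le_t by (intro mult_right_mono) auto
  then have "t * real \<Delta> \<le> (1 - x) ^ m * (exp 1 * t * real \<Delta>)"
    by (simp add: ac_simps)
  also have "\<dots> \<le> (1 - x) ^ m * real q ^ card T"
    unfolding card_T using edge_power_ge[OF e(1)] lll_weight_less_1 by (intro mult_left_mono) (auto simp: x_def)
  finally show ?thesis
    using bound by (smt (verit) mult_left_mono of_nat_0_le_iff)
qed

lemma card_Int_blocked_le:
  assumes "v \<in> V" "c \<in> {1..q}"
  shows "real (card (\<C> \<inter> blocked v c)) * t \<le> real (card \<C>)"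
proof (cases "{e \<in> E. v \<in> e} = {}")
  case False
  then obtain e where "e \<in> E" by auto
  then have "0 < real \<Delta>"
    using one_le_max_degree by fastforce
  define E\<^sub>v where "E\<^sub>v = {e \<in> E. v \<in> e}"
  have "finite E\<^sub>v"
    using finite_V edge_subset by (auto simp: E\<^sub>v_def intro: rev_finite_subset[of "Pow V"])
  have "card (\<C> \<inter> blocked v c) \<le> (\<Sum>e\<in>E\<^sub>v. card (blocked_by e v c \<inter> \<C>))"
  proof -
    have "\<C> \<inter> blocked v c = (\<Union>e\<in>E\<^sub>v. blocked_by e v c \<inter> \<C>)"
      by (auto simp: blocked_def E\<^sub>v_def)
    then show ?thesis by (simp only: card_UN_le[OF \<open>finite E\<^sub>v\<close>])
  qed
  then have "real (card (\<C> \<inter> blocked v c)) * (t * real \<Delta>)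
      \<le> real (\<Sum>e\<in>E\<^sub>v. card (blocked_by e v c \<inter> \<C>)) * (t * real \<Delta>)"
    using two_le_t by (intro mult_right_mono of_nat_mono) auto
  also have "\<dots> = (\<Sum>e\<in>E\<^sub>v. real (card (blocked_by e v c \<inter> \<C>)) * (t * real \<Delta>))"
    by (simp add: sum_distrib_right)
  also have "\<dots> \<le> (\<Sum>e\<in>E\<^sub>v. real (card \<C>))"
    using assms by (intro sum_mono card_blocked_by_Int_le) (auto simp: E\<^sub>v_def)
  also have "\<dots> \<le> real \<Delta> * real (card \<C>)"
    using degree_le_max_degree[OF finite_V assms(1), of E] by (simp add: E\<^sub>v_def degree_def mult_right_mono)
  finally show ?thesis
    using \<open>0 < real \<Delta>\<close> by (simp add: ac_simps)
next
  case True
  then have "blocked v c = {}" unfolding blocked_def by blast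
  then show ?thesis by simp
qed

lemma fun_upd_in_proper_colourings:
  assumes \<sigma>: "\<sigma> \<in> \<C>" "\<sigma> \<notin> blocked v c" and "v \<in> V" "c \<in> {1..q}"
  shows "\<sigma>(v := c) \<in> \<C>"
proof -
  have "1 < card (\<sigma>(v := c) ` e \<union> P e)" if "e \<in> E" for e
  proof (cases "v \<in> e")
    case False
    then have "\<sigma>(v := c) ` e = \<sigma> ` e" by auto
    then show ?thesis
      using \<sigma> \<open>e \<in> E\<close> by (simp add: proper_colourings_def)
  next
    case True
    \<comment> \<open>An edge through \<open>v\<close> sees \<open>c\<close> at \<open>v\<close> and, as \<open>\<sigma>\<close> is not blocked, another colour elsewhere.\<close>
    then obtain u where u: "u \<in> e - {v}" "\<sigma> u \<noteq> c"
      using \<sigma> \<open>e \<in> E\<close> proper_colourings_subset unfolding blocked_def blocked_by_def by blast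
    have "finite (\<sigma>(v := c) ` e \<union> P e)"
      using \<open>e \<in> E\<close> finite_edge pins_subset by (meson finite_Un finite_atLeastAtMost finite_imageI finite_subset)
    moreover have "{c, \<sigma> u} \<subseteq> \<sigma>(v := c) ` e \<union> P e"
      using True u by (auto intro!: image_eqI)
    ultimately have "card {c, \<sigma> u} \<le> card (\<sigma>(v := c) ` e \<union> P e)"
      by (rule card_mono)
    then show ?thesis
      using u(2) by simp
  qed
  moreover have "\<sigma>(v := c) \<in> V \<rightarrow>\<^sub>E {1..q}"
    using \<sigma> proper_colourings_subset assms by (auto simp: PiE_iff extensional_def)
  ultimately show ?thesis
    by (simp add: proper_colourings_def colourings_def)
qed

lemma card_unblocked_le:
  assumes "v \<in> V" "c \<in> {1..q}"
  shows "card (\<C> - blocked v c) \<le> card {\<sigma> \<in> \<C>. \<sigma> v = c} * q"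
proof -
  have "(\<lambda>\<sigma>. \<sigma>(v := c)) ` (\<C> - blocked v c) \<subseteq> {\<sigma> \<in> \<C>. \<sigma> v = c}"
    using fun_upd_in_proper_colourings assms by auto
  then have "card (\<C> - blocked v c) \<le> card {\<sigma> \<in> \<C>. \<sigma> v = c} * card {1..q}"
    by (intro card_PiE_fun_upd_le[OF assms(1)])
      (use proper_colourings_subset finite_proper_colourings in auto)
  then show ?thesis by simp
qed

end

theorem lemma2p4:
  fixes V :: "'v set" and E :: "'v set set" and P :: "'v set \<Rightarrow> nat set"
    and q k k' :: nat and t :: real and v :: 'v and c :: nat
  assumes "finite V"
    and "\<forall>e\<in>E. e \<subseteq> V"
    and "\<forall>e\<in>E. P e \<subseteq> {1..q}"
    and "2 \<le> k'" and "k' \<le> k"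
    and "\<forall>e\<in>E. k' \<le> card e \<and> card e \<le> k"
    and "real k \<le> t"
    and "real q \<ge> (exp 1 * t * real (max_degree V E)) powr (1 / (real k' - 1))"
    and "v \<in> V" and "c \<in> {1..q}"
  shows "prob_colour V E P q v c \<ge> (1 / real q) * (1 - 1 / t)"
proof -
  interpret pinned_hypergraph_colouring V E P q k k' t
    using assms by unfold_locales auto
  let ?N = "real (card {\<sigma> \<in> \<C>. \<sigma> v = c})"
  have "real (card \<C>) = real (card (\<C> \<inter> blocked v c)) + real (card (\<C> - blocked v c))"
    using card_Int_Diff[OF finite_proper_colourings] by (metis of_nat_add)
  moreover have "real (card (\<C> \<inter> blocked v c)) \<le> real (card \<C>) / t"
    using card_Int_blocked_le[OF assms(9,10)] two_le_t by (simp add: pos_le_divide_eq)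
  moreover have "real (card \<C>) * (1 - 1 / t) = real (card \<C>) - real (card \<C>) / t"
    by (simp add: algebra_simps)
  ultimately have "real (card \<C>) * (1 - 1 / t) \<le> real (card (\<C> - blocked v c))"
    by linarith
  also have "\<dots> \<le> ?N * real q"
    using card_unblocked_le[OF assms(9,10)] by (simp flip: of_nat_mult)
  finally have "real (card \<C>) * (1 - 1 / t) / real q \<le> ?N"
    using assms(10) by (simp add: pos_divide_le_eq)
  moreover have "0 < card \<C>"
    using card_proper_colourings_pos assms(10) by auto
  ultimately show ?thesis
    unfolding prob_colour_def by (simp add: pos_le_divide_eq mult.commute)
qed

end
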